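(* Fix $\omega\in(0,1)$, $\gamma\in(0,1)$, $\kappa\in(0,1)$, $\Delta\in(0,e-2)$, $G\ge0$, and an integer $\hat\tau_1\ge1$ with $\hat\tau_1^\omega>\frac{1}{1-\ln(2+\Delta)}$. Let $c\ge\frac{\ln(2+\Delta)+1/\hat\tau_1^\omega}{1-\ln(2+\Delta)-1/\hat\tau_1^\omega}$, and let $t_0\ge\hat\tau_1$ be an integer such that $t_1:=t_0+\frac{2c}{\kappa}t_0^\omega$ is an integer. Let $\gamma'=\frac{1+\gamma}{2}$, $\xi=\frac{1-\gamma}{4}$, and define $X_{t_0}=G$ and $X_{t+1}=(1-t^{-\omega})X_t+t^{-\omega}\gamma'G$ for $t\ge t_0$. Then for every $t\ge t_1$, $$X_t\le\Big(\gamma'+\frac{2}{2+\Delta}\xi\Big)G.$$ *)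

theory Defs
  imports Complex_Main
begin

end

theory Submission
  imports Defs
begin

text \<open>The deviation \<open>X t - \<gamma>' G\<close> contracts by the factor \<open>1 - t\<^sup>-\<^sup>\<omega> \<le> exp (-t\<^sup>-\<^sup>\<omega>)\<close> at each
  step, so after the window \<open>[t\<^sub>0, t\<^sub>1)\<close> it has shrunk by \<open>exp (-\<Sum> t\<^sup>-\<^sup>\<omega>)\<close>. The window has
  \<open>a t\<^sub>0\<^sup>\<omega>\<close> terms (\<open>a = 2c/\<kappa>\<close>), each at least \<open>t\<^sub>1\<^sup>-\<^sup>\<omega>\<close>, so the sum is at least
  \<open>a/(1+a) \<ge> c/(1+c) > ln (2 + \<Delta>)\<close> by the choice of \<open>c\<close>; the initial deviation \<open>2\<xi>G\<close>
  therefore drops below \<open>2\<xi>G/(2+\<Delta>)\<close>.\<close>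

lemma contraction_le_exp_sum:
  fixes Y q :: "nat \<Rightarrow> real"
  assumes q_le_1: "\<And>t. t0 \<le> t \<Longrightarrow> q t \<le> 1"
    and contract: "\<And>t. t0 \<le> t \<Longrightarrow> Y (Suc t) = (1 - q t) * Y t"
    and "Y t0 \<le> B" "0 \<le> B" "t0 \<le> t"
  shows "Y t \<le> B * exp (- (\<Sum>s\<in>{t0..<t}. q s))"
  using \<open>t0 \<le> t\<close>
proof (induction t rule: dec_induct)
  case base
  show ?case using \<open>Y t0 \<le> B\<close> by simp
next
  case (step t)
  have "Y (Suc t) = (1 - q t) * Y t" using contract step.hyps(1) by simp
  also have "\<dots> \<le> (1 - q t) * (B * exp (- (\<Sum>s\<in>{t0..<t}. q s)))"
    using step.IH q_le_1[OF step.hyps(1)] by (intro mult_left_mono) auto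
  also have "\<dots> \<le> exp (- q t) * (B * exp (- (\<Sum>s\<in>{t0..<t}. q s)))"
    using exp_ge_add_one_self[of "- q t"] \<open>0 \<le> B\<close> by (intro mult_right_mono) auto
  also have "\<dots> = B * exp (- (\<Sum>s\<in>{t0..<Suc t}. q s))"
    using step.hyps by (simp add: exp_add[symmetric])
  finally show ?case .
qed

lemma sum_powr_window_ge:
  fixes \<omega> a :: real
  assumes "0 < \<omega>" "\<omega> < 1" "0 \<le> a" "1 \<le> t0"
    and t1_eq: "real t1 = real t0 + a * real t0 powr \<omega>"
  shows "a / (1 + a) \<le> (\<Sum>s\<in>{t0..<t1}. real s powr (- \<omega>))"
proof -
  define r where "r = real t0 / real t1"
  have "real t0 \<le> real t1" using t1_eq \<open>0 \<le> a\<close> by simp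
  hence t0_le_t1: "t0 \<le> t1" by simp
  have r_pos: "0 < r" and r_le_1: "r \<le> 1"
    using \<open>1 \<le> t0\<close> t0_le_t1 by (auto simp: r_def)
  have "real t1 \<le> real t0 * (1 + a)"
    using t1_eq powr_mono[of \<omega> 1 "real t0"] assms by (simp add: algebra_simps mult_left_mono)
  hence "1 / (1 + a) \<le> r"
    using \<open>1 \<le> t0\<close> \<open>0 \<le> a\<close> t0_le_t1 unfolding r_def
    by (simp add: frac_le field_simps)
  hence "a / (1 + a) \<le> a * r" using \<open>0 \<le> a\<close> by (metis mult_left_mono times_divide_eq_right mult_1_right)
  also have "\<dots> \<le> a * r powr \<omega>"
  proof -
    have "r powr 1 \<le> r powr \<omega>" using r_pos r_le_1 \<open>\<omega> < 1\<close> by (intro powr_mono') auto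
    thus ?thesis using r_pos \<open>0 \<le> a\<close> by (intro mult_left_mono) auto
  qed
  also have "\<dots> = real (card {t0..<t1}) * real t1 powr (- \<omega>)"
    using t1_eq t0_le_t1 \<open>1 \<le> t0\<close>
    by (simp add: r_def powr_divide powr_minus divide_inverse[symmetric])
  also have "\<dots> \<le> (\<Sum>s\<in>{t0..<t1}. real s powr (- \<omega>))"
    using \<open>1 \<le> t0\<close> \<open>0 < \<omega>\<close> by (intro sum_bounded_below) (auto simp: powr_mono2')
  finally show ?thesis .
qed

lemma le_div_one_plus_if_div_one_minus_le:
  fixes x c :: real
  assumes "x < 1" "0 < x" "x / (1 - x) \<le> c"
  shows "x \<le> c / (1 + c)"
proof -
  have "x \<le> c * (1 - x)" using assms by (simp add: pos_divide_le_eq)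
  moreover have "0 < c" using assms by (smt (verit) divide_pos_pos)
  ultimately show ?thesis by (simp add: pos_le_divide_eq algebra_simps)
qed

lemma div_one_plus_mono:
  fixes a c :: real
  assumes "0 \<le> c" "c \<le> a"
  shows "c / (1 + c) \<le> a / (1 + a)"
  using assms by (simp add: divide_simps algebra_simps)

lemma window_sum_powr_gt_ln:
  fixes \<omega> \<kappa> \<Delta> c :: real
  assumes "0 < \<omega>" "\<omega> < 1" "0 < \<kappa>" "\<kappa> \<le> 2" "0 < \<Delta>" "\<Delta> < exp 1 - 2"
    and "1 \<le> tau1" "1 / (1 - ln (2 + \<Delta>)) < real tau1 powr \<omega>"
    and c_ge: "(ln (2 + \<Delta>) + 1 / real tau1 powr \<omega>) / (1 - ln (2 + \<Delta>) - 1 / real tau1 powr \<omega>) \<le> c"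
    and "tau1 \<le> t0"
    and t1_eq: "real t1 = real t0 + (2 * c / \<kappa>) * real t0 powr \<omega>"
  shows "t0 \<le> t1" "ln (2 + \<Delta>) < (\<Sum>s\<in>{t0..<t1}. real s powr (- \<omega>))"
proof -
  define L where "L = ln (2 + \<Delta>)"
  define e where "e = 1 / real tau1 powr \<omega>"
  define a where "a = 2 * c / \<kappa>"
  have L_pos: "0 < L" and "L < 1"
    using assms(5,6) ln_less_cancel_iff[of "2 + \<Delta>" "exp 1"] by (auto simp: L_def)
  have e_pos: "0 < e" and "L + e < 1"
    using assms(7,8) \<open>L < 1\<close> by (auto simp: e_def L_def field_simps)
  have "(L + e) / (1 - (L + e)) \<le> c" using c_ge by (simp add: L_def e_def diff_diff_eq)
  hence "L + e \<le> c / (1 + c)" and "0 \<le> c"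
    using le_div_one_plus_if_div_one_minus_le[of "L + e" c] \<open>L + e < 1\<close> L_pos e_pos
    by (auto intro: order_trans[rotated] simp: zero_le_divide_iff)
  moreover have "c \<le> a" using \<open>0 \<le> c\<close> assms(3,4) mult_left_mono[of \<kappa> 2 c]
    by (simp add: a_def pos_le_divide_eq)
  moreover have "a / (1 + a) \<le> (\<Sum>s\<in>{t0..<t1}. real s powr (- \<omega>))"
    using sum_powr_window_ge[of \<omega> a t0 t1] assms(1,2,7,10) t1_eq \<open>0 \<le> c\<close> \<open>c \<le> a\<close>
    by (simp add: a_def)
  ultimately show "L < (\<Sum>s\<in>{t0..<t1}. real s powr (- \<omega>))"
    using div_one_plus_mono[of c a] e_pos by linarith
  have "0 \<le> a * real t0 powr \<omega>" using \<open>0 \<le> c\<close> \<open>c \<le> a\<close> by simp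
  thus "t0 \<le> t1" using t1_eq by (simp add: a_def)
qed

theorem lemma5:
  fixes \<omega> \<gamma> \<kappa> \<Delta> G c :: real
    and tau1 t0 t1 :: nat
    and X :: "nat \<Rightarrow> real"
  assumes "0 < \<omega>" "\<omega> < 1"
    and "0 < \<gamma>" "\<gamma> < 1"
    and "0 < \<kappa>" "\<kappa> < 1"
    and "0 < \<Delta>" "\<Delta> < exp 1 - 2"
    and "G \<ge> 0"
    and "tau1 \<ge> 1"
    and "real tau1 powr \<omega> > 1 / (1 - ln (2 + \<Delta>))"
    and "c \<ge> (ln (2 + \<Delta>) + 1 / real tau1 powr \<omega>) / (1 - ln (2 + \<Delta>) - 1 / real tau1 powr \<omega>)"
    and "t0 \<ge> tau1"
    and "real t1 = real t0 + (2 * c / \<kappa>) * real t0 powr \<omega>"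
    and "X t0 = G"
    and "\<And>t. t \<ge> t0 \<Longrightarrow>
           X (Suc t) = (1 - real t powr (-\<omega>)) * X t + real t powr (-\<omega>) * ((1 + \<gamma>) / 2) * G"
  shows "\<forall>t\<ge>t1. X t \<le> ((1 + \<gamma>) / 2 + 2 / (2 + \<Delta>) * ((1 - \<gamma>) / 4)) * G"
proof (intro allI impI)
  fix t assume "t1 \<le> t"
  define S where "S = (\<Sum>s\<in>{t0..<t}. real s powr (- \<omega>))"
  have "t0 \<le> t1" and "ln (2 + \<Delta>) < (\<Sum>s\<in>{t0..<t1}. real s powr (- \<omega>))"
    using window_sum_powr_gt_ln[of \<omega> \<kappa> \<Delta> tau1 c t0 t1] assms by auto
  moreover have "(\<Sum>s\<in>{t0..<t1}. real s powr (- \<omega>)) \<le> S"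
    using \<open>t1 \<le> t\<close> by (auto simp: S_def intro: sum_mono2)
  ultimately have "ln (2 + \<Delta>) < S" by linarith
  have "X t - (1 + \<gamma>) / 2 * G \<le> (1 - \<gamma>) / 2 * G * exp (- S)"
    unfolding S_def
  proof (rule contraction_le_exp_sum[where Y = "\<lambda>t. X t - (1 + \<gamma>) / 2 * G"])
    show "real s powr (- \<omega>) \<le> 1" if "t0 \<le> s" for s
      using that assms(1,10,13) powr_mono2'[of "- \<omega>" 1 "real s"] by simp
    show "X (Suc s) - (1 + \<gamma>) / 2 * G = (1 - real s powr (- \<omega>)) * (X s - (1 + \<gamma>) / 2 * G)"
      if "t0 \<le> s" for s
      using assms(16)[OF that] by (simp add: field_simps)
    show "t0 \<le> t" using \<open>t0 \<le> t1\<close> \<open>t1 \<le> t\<close> by simp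
  qed (use assms(3,4,9,15) mult_left_le_one_le[of G \<gamma>] in \<open>auto simp: algebra_simps\<close>)
  also have "\<dots> \<le> (1 - \<gamma>) / 2 * G * exp (- ln (2 + \<Delta>))"
    using \<open>ln (2 + \<Delta>) < S\<close> assms(4,9) by (intro mult_left_mono) auto
  finally show "X t \<le> ((1 + \<gamma>) / 2 + 2 / (2 + \<Delta>) * ((1 - \<gamma>) / 4)) * G"
    using assms(7) by (simp add: exp_minus field_simps)
qed

end
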